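(* Let $\mathbf v_1,\dots,\mathbf v_k\in\mathbb R^d$ be unit vectors with $\mathbf v_i^T\mathbf v_j=\beta$ for all $i\neq j$, where $\beta\in[0,1]$. Then $\bar{\mathbf w}=\frac{\sum_{j=1}^k\mathbf v_j}{\|\sum_{j=1}^k\mathbf v_j\|_2}$ is a fixed point of the ODE $\frac{d}{dt}\mathbf w=-(I_d-\mathbf w\mathbf w^T)\nabla L(\mathbf w)$, i.e. $(I_d-\bar{\mathbf w}\bar{\mathbf w}^T)\nabla L(\bar{\mathbf w})=0$.
   Context: Let $h_p$ be the probabilist's Hermite polynomials normalized to be orthonormal in $L^2$ of the standard Gaussian measure. Let $\sigma=\sum_{p\ge1}a_ph_p$, $\sigma^*=\sum_{p\ge1}b_ph_p$ be square integrable w.r.t. the standard Gaussian, $p^*=\min\{p:b_p\neq0\}$, $c_p=a_pb_p$, with $c_p\ge0$ for $p\ge p^*$, $c_{p^*}>0$ and the relevant series converging. The loss is $L(\mathbf w)=C-\mathbb E_{\mathbf x\sim\mathcal N(0,I_d)}\big[\sigma(\mathbf w^T\mathbf x)\sum_{j=1}^k\sigma^*(\mathbf v_j^T\mathbf x)\big]$, which for unit $\mathbf w$ equals $C-\sum_{p\ge p^*}c_p\sum_j(\mathbf v_j^T\mathbf w)^p$; this formula defines $L$ and its Euclidean gradient $\nabla L$ on $\mathbb R^d$. *)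

theory Defs
  imports "HOL-Analysis.Analysis"
begin

text \<open>Loss on R^d defined by the formula
  L(w) = C - sum_{p >= p*} c_p sum_{j=1..k} (v_j . w)^p,
  with c p = a p * b p the products of Hermite coefficients.\<close>

definition lossL :: "real \<Rightarrow> (nat \<Rightarrow> real) \<Rightarrow> nat \<Rightarrow> nat \<Rightarrow> (nat \<Rightarrow> real^'d) \<Rightarrow> real^'d \<Rightarrow> real" where
  "lossL C c pstar k v w =
     C - (\<Sum>p. if pstar \<le> p then c p * (\<Sum>j=1..k. (v j \<bullet> w) ^ p) else 0)"

definition gradL :: "(nat \<Rightarrow> real) \<Rightarrow> nat \<Rightarrow> nat \<Rightarrow> (nat \<Rightarrow> real^'d) \<Rightarrow> real^'d \<Rightarrow> real^'d" where
  "gradL c pstar k v w =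
     - (\<Sum>j=1..k. (\<Sum>p. if pstar \<le> p then real p * c p * (v j \<bullet> w) ^ (p - 1) else 0) *\<^sub>R v j)"

definition outer :: "real^'d \<Rightarrow> real^'d^'d" where
  "outer w = (\<chi> i j. w $ i * w $ j)"

end

theory Submission
  imports Defs
begin

text \<open>At any point \<open>w\<close> the gradient of the loss is a combination of the \<open>v\<^sub>j\<close> whose
  coefficients depend only on the correlations \<open>v\<^sub>j \<bullet> w\<close>. Equiangular unit vectors all have
  the same correlation with their sum, so at \<open>wbar\<close> the gradient is a multiple of the sum,
  hence of \<open>wbar\<close> itself, and the projection \<open>I - wbar wbar\<^sup>T\<close> annihilates it.\<close>

lemma outer_mult_vec: "outer w *v x = (w \<bullet> x) *\<^sub>R w"
  by (simp add: vec_eq_iff matrix_vector_mult_def outer_def inner_vec_def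
      sum_distrib_left sum_distrib_right mult.assoc mult.commute mult.left_commute)

lemma mat_1_minus_outer_mult_vec: "(mat 1 - outer w) *v x = x - (w \<bullet> x) *\<^sub>R w"
  by (simp add: matrix_vector_mult_diff_rdistrib outer_mult_vec)

lemma mat_1_minus_outer_normalized_mult_vec:
  fixes S :: "real^'d"
  shows "(mat 1 - outer ((1 / norm S) *\<^sub>R S)) *v (t *\<^sub>R S) = 0"
proof (cases "S = 0")
  case False
  then have "((1 / norm S) *\<^sub>R S) \<bullet> S = norm S"
    by (simp add: dot_square_norm power2_eq_square)
  with False show ?thesis
    by (simp add: mat_1_minus_outer_mult_vec)
qed simp

lemma inner_sum_equiangular:
  fixes v :: "'i \<Rightarrow> 'a::real_inner"
  assumes "finite I" "j \<in> I"
    and unit: "\<And>i. i \<in> I \<Longrightarrow> norm (v i) = 1"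
    and equiangular: "\<And>i i'. i \<in> I \<Longrightarrow> i' \<in> I \<Longrightarrow> i \<noteq> i' \<Longrightarrow> v i \<bullet> v i' = \<beta>"
  shows "v j \<bullet> (\<Sum>i\<in>I. v i) = 1 + real (card I - 1) * \<beta>"
proof -
  have "v j \<bullet> (\<Sum>i\<in>I. v i) = v j \<bullet> v j + (\<Sum>i\<in>I - {j}. v j \<bullet> v i)"
    using assms(1,2) by (simp add: sum.remove inner_add_right inner_sum_right)
  also have "(\<Sum>i\<in>I - {j}. v j \<bullet> v i) = (\<Sum>i\<in>I - {j}. \<beta>)"
    using assms(2) equiangular by (intro sum.cong) auto
  also have "v j \<bullet> v j = 1"
    using unit[OF assms(2)] by (simp add: dot_square_norm)
  finally show ?thesis
    using assms(1,2) by simp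
qed

lemma gradL_equal_correlations:
  assumes "\<forall>j\<in>{1..k}. v j \<bullet> w = t"
  shows "gradL c pstar k v w =
    - ((\<Sum>p. if pstar \<le> p then real p * c p * t ^ (p - 1) else 0) *\<^sub>R (\<Sum>j=1..k. v j))"
  unfolding gradL_def scaleR_sum_right
  using assms by (intro arg_cong[where f = uminus] sum.cong refl) auto

theorem lemma2:
  fixes a b :: "nat \<Rightarrow> real" and C \<beta> :: real and k :: nat
    and v :: "nat \<Rightarrow> real^'d"
  assumes k_pos: "k \<ge> 1"
    and a0: "a 0 = 0" and b0: "b 0 = 0"
    and b_nz: "\<exists>p. b p \<noteq> 0"
    and c_nonneg: "\<And>p. p \<ge> (LEAST p. b p \<noteq> 0) \<Longrightarrow> a p * b p \<ge> 0"
    and c_pstar: "a (LEAST p. b p \<noteq> 0) * b (LEAST p. b p \<noteq> 0) > 0"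
    and unit: "\<And>j. j \<in> {1..k} \<Longrightarrow> norm (v j) = 1"
    and beta: "\<And>i j. i \<in> {1..k} \<Longrightarrow> j \<in> {1..k} \<Longrightarrow> i \<noteq> j \<Longrightarrow> v i \<bullet> v j = \<beta>"
    and beta_range: "0 \<le> \<beta>" "\<beta> \<le> 1"
    and wbar: "wbar = (1 / norm (\<Sum>j=1..k. v j)) *\<^sub>R (\<Sum>j=1..k. v j)"
    and summ_L: "\<And>j. j \<in> {1..k} \<Longrightarrow>
        summable (\<lambda>p. if (LEAST p. b p \<noteq> 0) \<le> p then a p * b p * (v j \<bullet> wbar) ^ p else 0)"
    and summ_grad: "\<And>j. j \<in> {1..k} \<Longrightarrow>
        summable (\<lambda>p. if (LEAST p. b p \<noteq> 0) \<le> p then real p * (a p * b p) * (v j \<bullet> wbar) ^ (p - 1) else 0)"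
  shows "(mat 1 - outer wbar) *v gradL (\<lambda>p. a p * b p) (LEAST p. b p \<noteq> 0) k v wbar = 0"
proof -
  define S where "S = (\<Sum>j=1..k. v j)"
  have correlation: "\<forall>j\<in>{1..k}. v j \<bullet> wbar = (1 + real (k - 1) * \<beta>) / norm S"
    using inner_sum_equiangular[of "{1..k}" _ v \<beta>] unit beta by (simp add: wbar S_def)
  show ?thesis
    unfolding gradL_equal_correlations[OF correlation]
      scaleR_minus_left[symmetric]
    unfolding wbar S_def[symmetric]
    by (rule mat_1_minus_outer_normalized_mult_vec)
qed

end
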